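(* Let $b$ be a complex number and let $m\ge1$ be an integer. Then for all integers $n\ge 0$, $$D_{-m}(b;n)=\det\bigl(M_b(-m+i+j)\bigr)_{i,j=0}^{n-1}=p_{m+1}(-n).$$ Equivalently, $D_{-m}(b;n)=0$ for $1\le n\le m$, and $D_{-m}(b;n)=(-1)^{\binom{m+1}{2}}p_{m+1}(n-m-1)$ for $n\ge m+1$.
   Context: For a complex parameter $b$ and $n\ge0$, $M_b(n)=\sum_{k=0}^{n}\Bigl(\binom{n+k}{k}-\binom{n+k}{k-1}\Bigr)b^{n-k}$ (with $\binom{r}{-1}=0$), extended by $M_b(n)=0$ for $n<0$; equivalently $\sum_{n\ge0}M_b(n)x^n=\frac{C(x)}{1-bxC(x)}$ where $C(x)=\sum_{n\ge0}C_nx^n=\frac{1-\sqrt{1-4x}}{2x}$ is the Catalan generating function. For $m\in\mathbb Z$, $D_m(b;n)=\det(M_b(m+i+j))_{i,j=0}^{n-1}$, the $0\times0$ determinant being $1$. For an integer $m\ge0$, $p_m(n)$ is the polynomial $\prod_{1\le i\le j\le m-1}\frac{2n+i+j}{i+j}$ in $n$ (empty product $=1$). *)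

theory Defs
  imports "Jordan_Normal_Form.Determinant"
begin

text \<open>M_b(n) for integer n; zero for n < 0. The term binom(n+k, k-1) is 0 when k = 0.\<close>
definition Mb :: "complex \<Rightarrow> int \<Rightarrow> complex" where
  "Mb b n = (if n < 0 then 0 else
     (\<Sum>k\<in>{0..nat n}.
        (of_nat ((nat n + k) choose k)
         - (if k = 0 then 0 else of_nat ((nat n + k) choose (k - 1))))
        * b ^ (nat n - k)))"

definition Dm :: "int \<Rightarrow> complex \<Rightarrow> nat \<Rightarrow> complex" where
  "Dm m b n = det (mat n n (\<lambda>(i, j). Mb b (m + int i + int j)))"

definition pm :: "nat \<Rightarrow> complex \<Rightarrow> complex" where
  "pm m x = (\<Prod>(i, j)\<in>{(i, j). 1 \<le> i \<and> i \<le> j \<and> j \<le> m - 1}.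
               (2 * x + of_nat i + of_nat j) / (of_nat i + of_nat j))"

end

theory Submission
  imports Defs "HOL-Computational_Algebra.Formal_Power_Series"
begin

text \<open>The generating function of \<open>M\<^sub>b\<close> is \<open>C(x)/(1 - bxC(x))\<close>, whose reciprocal \<open>1 - bx - xC(x)\<close>
  has the coefficients \<open>-C\<^sub>k\<^sub>-\<^sub>1\<close> from \<open>x\<^sup>2\<close> on. For \<open>1 \<le> n \<le> m\<close> the first row of the Hankel
  matrix vanishes. For \<open>n = N + m + 1\<close>, reversing the rows turns \<open>D\<^sub>-\<^sub>m(b;n)\<close> into a Toeplitz
  determinant of \<open>M\<^sub>b\<close>, and Jacobi's theorem on complementary minors of mutually inverse power
  series turns it into an \<open>N \<times> N\<close> Toeplitz determinant of the reciprocal series, i.e.\ up to sign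
  the Hankel determinant \<open>det(C\<^sub>m\<^sub>+\<^sub>1\<^sub>+\<^sub>i\<^sub>+\<^sub>j)\<close>. The latter equals \<open>p\<^sub>m\<^sub>+\<^sub>1(N)\<close>: as functions of \<open>N\<close>
  both obey the Desnanot--Jacobi condensation recurrence and agree for \<open>N = 0, 1\<close>. Finally
  \<open>p\<^sub>m\<^sub>+\<^sub>1(-N-m-1) = \<plusminus>p\<^sub>m\<^sub>+\<^sub>1(N)\<close> by the symmetry \<open>(i, j) \<mapsto> (m + 1 - j, m + 1 - i)\<close> of the
  index set.\<close>

section \<open>Catalan numbers and the generating function of \<^const>\<open>Mb\<close>\<close>

fun catalan :: "nat \<Rightarrow> complex" where
  "catalan 0 = 1"
| catalan_Suc [simp del]: "catalan (Suc n) = (\<Sum>i\<le>n. catalan i * catalan (n - i))"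

definition catalan_fps :: "complex fps" where
  "catalan_fps = Abs_fps catalan"

lemma catalan_fps_eq: "catalan_fps = 1 + fps_X * catalan_fps ^ 2"
proof (rule fps_ext)
  fix n show "fps_nth catalan_fps n = fps_nth (1 + fps_X * catalan_fps ^ 2) n"
  proof (cases n)
    case (Suc k)
    have "fps_nth (fps_X * catalan_fps ^ 2) n = fps_nth (catalan_fps * catalan_fps) k"
      by (simp add: Suc fps_X_mult_nth power2_eq_square)
    also have "\<dots> = (\<Sum>i\<le>k. catalan i * catalan (k - i))"
      by (simp add: fps_mult_nth catalan_fps_def atLeast0AtMost)
    finally show ?thesis by (simp add: Suc catalan_fps_def catalan_Suc)
  qed (simp add: catalan_fps_def)
qed

lemma fps_nth_catalan_fps_power_Suc:
  "fps_nth (catalan_fps ^ (r + 1)) (Suc k)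
     = fps_nth (catalan_fps ^ r) (Suc k) + fps_nth (catalan_fps ^ (r + 2)) k"
proof -
  have "catalan_fps ^ (r + 1) = catalan_fps ^ r * (1 + fps_X * catalan_fps ^ 2)"
    using catalan_fps_eq by (metis power_Suc2 Suc_eq_plus1)
  also have "\<dots> = catalan_fps ^ r + fps_X * catalan_fps ^ (r + 2)"
    by (simp add: algebra_simps power_add power2_eq_square)
  finally have "fps_nth (catalan_fps ^ (r + 1)) (Suc k)
      = fps_nth (catalan_fps ^ r + fps_X * catalan_fps ^ (r + 2)) (Suc k)"
    by simp
  then show ?thesis by simp
qed

definition ballot :: "nat \<Rightarrow> nat \<Rightarrow> complex" where
  "ballot n k = of_nat ((n + k) choose k) - (if k = 0 then 0 else of_nat ((n + k) choose (k - 1)))"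

lemma ballot_0 [simp]: "ballot n 0 = 1"
  by (simp add: ballot_def)

lemma ballot_Suc_self: "ballot n (Suc n) = 0"
proof -
  have "(n + Suc n) choose Suc n = (n + Suc n) choose n"
    by (metis add_Suc_right add_diff_cancel_right' binomial_symmetric le_add2 add.commute)
  then show ?thesis by (simp add: ballot_def)
qed

lemma ballot_Suc_Suc: "ballot (Suc n) (Suc k) = ballot n (Suc k) + ballot (Suc n) k"
  by (cases k) (simp_all add: ballot_def add_ac)

lemma fps_nth_catalan_fps_power:
  "k \<le> n + 1 \<Longrightarrow> fps_nth (catalan_fps ^ (n + 1 - k)) k = ballot n k"
proof (induction n arbitrary: k)
  case 0
  then consider "k = 0" | "k = 1" by linarith
  then show ?case
    by cases (simp_all add: fps_nth_power_0 catalan_fps_def ballot_def)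
next
  case (Suc n)
  note outer_IH = Suc.IH
  show ?case using Suc.prems
  proof (induction k)
    case (Suc k)
    show ?case
    proof (cases "k = Suc n")
      case True
      then show ?thesis using ballot_Suc_self[of "Suc n"] by simp
    next
      case False
      then have kn: "Suc k \<le> n + 1" using Suc.prems by simp
      have "fps_nth (catalan_fps ^ (Suc n + 1 - Suc k)) (Suc k)
          = fps_nth (catalan_fps ^ (n - k)) (Suc k) + fps_nth (catalan_fps ^ (Suc n + 1 - k)) k"
        using fps_nth_catalan_fps_power_Suc[of "n - k" k] kn by (simp add: Suc_diff_le)
      also have "\<dots> = ballot n (Suc k) + ballot (Suc n) k"
        using Suc.IH kn outer_IH[OF kn] by simp
      finally show ?thesis by (simp add: ballot_Suc_Suc)
    qed
  qed (simp add: fps_nth_power_0 catalan_fps_def)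
qed

lemma Mb_nonneg_eq_sum:
  "Mb b (int n) = (\<Sum>j\<in>{0..n}. b ^ j * fps_nth (catalan_fps ^ (j + 1)) (n - j))"
proof -
  have "Mb b (int n) = (\<Sum>k\<in>{0..n}. ballot n k * b ^ (n - k))"
    unfolding Mb_def ballot_def nat_int by simp
  also have "\<dots> = (\<Sum>j\<in>{0..n}. ballot n (n - j) * b ^ (n - (n - j)))"
    by (subst sum.atLeastAtMost_rev) simp
  also have "\<dots> = (\<Sum>j\<in>{0..n}. b ^ j * fps_nth (catalan_fps ^ (j + 1)) (n - j))"
    by (rule sum.cong) (auto simp: fps_nth_catalan_fps_power[of "n - _" n, symmetric])
  finally show ?thesis .
qed

definition Mb_fps :: "complex \<Rightarrow> complex fps" where
  "Mb_fps b = Abs_fps (\<lambda>n. Mb b (int n))"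

lemma fps_nth_power_times_catalan_fps:
  "fps_nth ((fps_const b * fps_X * catalan_fps) ^ j * catalan_fps) n
     = (if n < j then 0 else b ^ j * fps_nth (catalan_fps ^ (j + 1)) (n - j))"
proof -
  have "(fps_const b * fps_X * catalan_fps) ^ j * catalan_fps
      = fps_const (b ^ j) * (fps_X ^ j * catalan_fps ^ (j + 1))"
    by (simp add: power_mult_distrib fps_const_power mult_ac)
  then show ?thesis by (simp only:) (simp add: fps_X_power_mult_nth)
qed

text \<open>Coefficientwise, \<^const>\<open>Mb_fps\<close> agrees with the truncations of
  \<open>C / (1 - b x C)\<close> expanded as a geometric series.\<close>
lemma Mb_fps_times_one_minus: "Mb_fps b * (1 - fps_const b * fps_X * catalan_fps) = catalan_fps"
proof (rule fps_ext)
  fix n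
  define q where "q = fps_const b * fps_X * catalan_fps"
  define S where "S = (\<Sum>j<Suc n. q ^ j * catalan_fps)"
  have S_nth: "fps_nth (Mb_fps b) i = fps_nth S i" if "i \<le> n" for i
  proof -
    have "fps_nth S i = (\<Sum>j<Suc n. fps_nth (q ^ j * catalan_fps) i)"
      by (simp add: S_def fps_sum_nth)
    also have "\<dots> = (\<Sum>j<Suc n. if i < j then 0 else b ^ j * fps_nth (catalan_fps ^ (j + 1)) (i - j))"
      unfolding q_def fps_nth_power_times_catalan_fps ..
    also have "\<dots> = (\<Sum>j\<in>{0..i}. b ^ j * fps_nth (catalan_fps ^ (j + 1)) (i - j))"
      by (rule sum.mono_neutral_cong_right) (use that in auto)
    finally show ?thesis by (simp add: Mb_fps_def Mb_nonneg_eq_sum)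
  qed
  have "fps_nth (Mb_fps b * (1 - q)) n = fps_nth (S * (1 - q)) n"
    using S_nth by (simp add: fps_mult_nth)
  also have "S * (1 - q) = catalan_fps - q ^ Suc n * catalan_fps"
  proof -
    have "S = (\<Sum>j<Suc n. q ^ j) * catalan_fps"
      by (simp only: S_def sum_distrib_right)
    then have "S * (1 - q) = catalan_fps * ((1 - q) * (\<Sum>j<Suc n. q ^ j))"
      by (simp only: mult_ac)
    also have "\<dots> = catalan_fps * (1 - q ^ Suc n)"
      by (simp only: one_diff_power_eq)
    finally show ?thesis
      by (simp only: right_diff_distrib mult_1_right mult_1_left mult.commute)
  qed
  also have "fps_nth \<dots> n = fps_nth catalan_fps n"
  proof -
    have "fps_nth (q ^ Suc n * catalan_fps) n = 0"
      unfolding q_def fps_nth_power_times_catalan_fps by simp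
    then show ?thesis by simp
  qed
  finally show "fps_nth (Mb_fps b * (1 - fps_const b * fps_X * catalan_fps)) n = fps_nth catalan_fps n"
    by (simp add: q_def)
qed

lemma Mb_fps_times_inverse:
  "Mb_fps b * (1 - fps_const b * fps_X - fps_X * catalan_fps) = 1"
proof -
  have XC: "fps_X * catalan_fps ^ 2 = catalan_fps - 1"
    using catalan_fps_eq by (simp add: algebra_simps)
  have "(1 - fps_const b * fps_X * catalan_fps) * (1 - fps_X * catalan_fps)
      = 1 - fps_X * catalan_fps - fps_const b * fps_X * catalan_fps
        + fps_const b * fps_X * (fps_X * catalan_fps ^ 2)"
    by (simp add: algebra_simps power2_eq_square)
  also have "\<dots> = 1 - fps_const b * fps_X - fps_X * catalan_fps"
    by (simp add: XC algebra_simps)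
  finally have "1 - fps_const b * fps_X - fps_X * catalan_fps
      = (1 - fps_const b * fps_X * catalan_fps) * (1 - fps_X * catalan_fps)" ..
  then have "Mb_fps b * (1 - fps_const b * fps_X - fps_X * catalan_fps)
      = catalan_fps * (1 - fps_X * catalan_fps)"
    by (simp add: Mb_fps_times_one_minus mult.assoc[symmetric])
  also have "\<dots> = 1"
    using XC by (simp add: algebra_simps power2_eq_square)
  finally show ?thesis .
qed

lemma Mb_convolution:
  "(\<Sum>t\<in>{0..c}. Mb b (int t) * fps_nth (1 - fps_const b * fps_X - fps_X * catalan_fps) (c - t))
     = (if c = 0 then 1 else 0)"
  using arg_cong[OF Mb_fps_times_inverse, of "\<lambda>f. fps_nth f c"]
  by (simp add: fps_mult_nth Mb_fps_def)

section \<open>Toeplitz, Hankel and bordered determinants\<close>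

lemma index_mult_mat_sum:
  assumes "A \<in> carrier_mat n k" "B \<in> carrier_mat k m" "i < n" "j < m"
  shows "(A * B) $$ (i, j) = (\<Sum>t<k. A $$ (i, t) * B $$ (t, j))"
  using assms by (simp add: scalar_prod_def atLeast0LessThan)

definition exchange_mat :: "nat \<Rightarrow> 'a :: comm_ring_1 mat" where
  "exchange_mat n = mat n n (\<lambda>(i, j). if i + j = n - 1 then 1 else 0)"

lemma exchange_mat_carrier: "exchange_mat n \<in> carrier_mat n n"
  by (simp add: exchange_mat_def)

lemma det_exchange_mat: "det (exchange_mat n :: 'a :: idom mat) = (-1) ^ (\<Sum>i<n. i)"
proof (induction n)
  case 0
  then show ?case by (simp add: exchange_mat_def)
next
  case (Suc n)
  let ?J = "exchange_mat (Suc n) :: 'a mat"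
  have J: "?J \<in> carrier_mat (1 + n) (1 + n)" by (simp add: exchange_mat_def)
  have "det ?J = (-1) ^ (1 * n)
      * det (mat (1 + n) (1 + n) (\<lambda>(i, j). ?J $$ (if i < 1 then i + n else i - 1, j)))"
    by (rule det_swap_rows[OF J])
  also have "mat (1 + n) (1 + n) (\<lambda>(i, j). ?J $$ (if i < 1 then i + n else i - 1, j))
      = four_block_mat (1\<^sub>m 1) (0\<^sub>m 1 n) (0\<^sub>m n 1) (exchange_mat n)"
    by (rule eq_matI) (auto simp: exchange_mat_def)
  also have "det \<dots> = det (1\<^sub>m 1 :: 'a mat) * det (exchange_mat n :: 'a mat)"
    by (rule det_four_block_mat_upper_right_zero) (auto simp: exchange_mat_def)
  finally show ?case using Suc.IH by (simp add: power_add)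
qed

lemma exchange_mat_mult:
  assumes "A \<in> carrier_mat n n"
  shows "exchange_mat n * A = mat n n (\<lambda>(i, j). A $$ (n - 1 - i, j))"
proof (rule eq_matI)
  fix i j assume "i < dim_row (mat n n (\<lambda>(i, j). A $$ (n - 1 - i, j)))"
    "j < dim_col (mat n n (\<lambda>(i, j). A $$ (n - 1 - i, j)))"
  then have i: "i < n" and j: "j < n" by auto
  have "(exchange_mat n * A) $$ (i, j) = (\<Sum>t<n. exchange_mat n $$ (i, t) * A $$ (t, j))"
    by (rule index_mult_mat_sum[OF exchange_mat_carrier assms i j])
  also have "\<dots> = (\<Sum>t<n. if t = n - 1 - i then A $$ (t, j) else 0)"
    by (rule sum.cong) (use i in \<open>auto simp: exchange_mat_def\<close>)
  finally show "(exchange_mat n * A) $$ (i, j) = mat n n (\<lambda>(i, j). A $$ (n - 1 - i, j)) $$ (i, j)"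
    using i j by simp
qed (use assms in \<open>auto simp: exchange_mat_def\<close>)

lemma det_reverse_rows:
  fixes F :: "nat \<Rightarrow> nat \<Rightarrow> 'a :: idom"
  shows "det (mat n n (\<lambda>(i, j). F (n - 1 - i) j)) = (-1) ^ (\<Sum>i<n. i) * det (mat n n (\<lambda>(i, j). F i j))"
proof -
  have A: "mat n n (\<lambda>(i, j). F i j) \<in> carrier_mat n n" by simp
  have "mat n n (\<lambda>(i, j). F (n - 1 - i) j) = exchange_mat n * mat n n (\<lambda>(i, j). F i j)"
    unfolding exchange_mat_mult[OF A] by (rule eq_matI) auto
  then show ?thesis using det_mult[OF exchange_mat_carrier A] det_exchange_mat[where 'a = 'a] by simp
qed

definition toeplitz :: "(nat \<Rightarrow> 'a :: zero) \<Rightarrow> nat \<Rightarrow> nat \<Rightarrow> 'a mat" where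
  "toeplitz a N n = mat n n (\<lambda>(i, j). if i \<le> N + j then a (N + j - i) else 0)"

lemma sum_shifted_convolution:
  fixes a g :: "nat \<Rightarrow> 'a :: semiring_0"
  assumes "r \<le> d" "d < K"
  shows "(\<Sum>t<K. (if r \<le> t then a (t - r) else 0) * (if t \<le> d then g (d - t) else 0))
       = (\<Sum>s\<in>{0..d - r}. a s * g (d - r - s))"
proof -
  have "(\<Sum>t<K. (if r \<le> t then a (t - r) else 0) * (if t \<le> d then g (d - t) else 0))
      = (\<Sum>t\<in>{r..d}. a (t - r) * g (d - t))"
    by (rule sum.mono_neutral_cong_right) (use assms in auto)
  also have "\<dots> = (\<Sum>s\<in>{0..d - r}. a (s + r - r) * g (d - (s + r)))"
    using sum.shift_bounds_cl_nat_ivl[of "\<lambda>t. a (t - r) * g (d - t)" 0 r "d - r"] assms by simp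
  also have "\<dots> = (\<Sum>s\<in>{0..d - r}. a s * g (d - r - s))"
    by (rule sum.cong) (auto simp: diff_diff_left add.commute)
  finally show ?thesis .
qed

text \<open>If \<open>g\<close> is the inverse power series of \<open>a\<close>, the upper unitriangular Toeplitz matrix of \<open>a\<close>
  maps the first \<open>N\<close> columns built from \<open>g\<close> to unit vectors; this is the matrix identity behind
  Jacobi's complementary minor theorem.\<close>
lemma unitriangular_toeplitz_mult:
  fixes a g :: "nat \<Rightarrow> 'a :: comm_ring_1"
  assumes conv: "\<And>c. (\<Sum>t\<in>{0..c}. a t * g (c - t)) = (if c = 0 then 1 else 0)"
  shows "toeplitz a 0 (n + N)
       * mat (n + N) (n + N) (\<lambda>(t, c). if c < N then (if t \<le> n + c then g (n + c - t) else 0)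
                                       else (if t = c then 1 else 0))
       = mat (n + N) (n + N) (\<lambda>(r, c). if c < N then (if r = n + c then 1 else 0)
                                       else (if r \<le> c then a (c - r) else 0))"
    (is "?U * ?W = ?P")
proof (rule eq_matI)
  fix r c assume "r < dim_row ?P" "c < dim_col ?P"
  then have r: "r < n + N" and c: "c < n + N" by auto
  have "(?U * ?W) $$ (r, c) = (\<Sum>t<n + N. ?U $$ (r, t) * ?W $$ (t, c))"
    by (rule index_mult_mat_sum[OF _ _ r c]) (auto simp: toeplitz_def)
  also have "\<dots> = ?P $$ (r, c)"
  proof (cases "c < N")
    case True
    have "(\<Sum>t<n + N. ?U $$ (r, t) * ?W $$ (t, c))
       = (\<Sum>t<n + N. (if r \<le> t then a (t - r) else 0) * (if t \<le> n + c then g (n + c - t) else 0))"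
      by (rule sum.cong) (use r c True in \<open>auto simp: toeplitz_def\<close>)
    also have "\<dots> = (if r = n + c then 1 else 0)"
    proof (cases "r \<le> n + c")
      case True
      with sum_shifted_convolution[OF True, of "n + N" a g] conv[of "n + c - r"] \<open>c < N\<close>
      show ?thesis by auto
    next
      case False
      then show ?thesis by (intro trans[OF sum.neutral]) auto
    qed
    finally show ?thesis using True r c by simp
  next
    case False
    have "(\<Sum>t<n + N. ?U $$ (r, t) * ?W $$ (t, c)) = (\<Sum>t<n + N. if t = c then ?U $$ (r, t) else 0)"
      by (rule sum.cong) (use False r c in auto)
    then show ?thesis using False r c by (simp add: toeplitz_def)
  qed
  finally show "(?U * ?W) $$ (r, c) = ?P $$ (r, c)" .
qed (auto simp: toeplitz_def)

lemma det_toeplitz_0: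
  fixes a :: "nat \<Rightarrow> 'a :: comm_ring_1"
  assumes "a 0 = 1"
  shows "det (toeplitz a 0 K) = 1"
proof -
  have U: "toeplitz a 0 K \<in> carrier_mat K K" by (simp add: toeplitz_def)
  have "upper_triangular (toeplitz a 0 K)" by (auto simp: toeplitz_def upper_triangular_def)
  then have "det (toeplitz a 0 K) = prod_list (diag_mat (toeplitz a 0 K))"
    using det_upper_triangular U by blast
  also have "diag_mat (toeplitz a 0 K) = replicate K 1"
    by (rule nth_equalityI) (auto simp: diag_mat_def toeplitz_def assms)
  finally show ?thesis by simp
qed

lemma det_toeplitz_dual:
  fixes a g :: "nat \<Rightarrow> 'a :: idom"
  assumes a0: "a 0 = 1"
    and conv: "\<And>c. (\<Sum>t\<in>{0..c}. a t * g (c - t)) = (if c = 0 then 1 else 0)"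
  shows "det (toeplitz a N n) = (-1) ^ (n * N) * det (toeplitz g n N)"
proof -
  define K where "K = n + N"
  define W where "W = mat K K (\<lambda>(t, c). if c < N then (if t \<le> n + c then g (n + c - t) else 0)
                                    else (if t = c then 1 else 0))"
  define P where "P = mat K K (\<lambda>(r, c). if c < N then (if r = n + c then 1 else 0)
                                    else (if r \<le> c then a (c - r) else 0))"
  have U: "toeplitz a 0 K \<in> carrier_mat K K" and W: "W \<in> carrier_mat K K"
    and P: "P \<in> carrier_mat (n + N) (n + N)"
    by (auto simp: toeplitz_def W_def P_def K_def)
  have detW: "det W = det (toeplitz g n N)"
  proof -
    have "W = four_block_mat (toeplitz g n N) (0\<^sub>m N n)
        (mat n N (\<lambda>(q, p). if N + q \<le> n + p then g (n + p - N - q) else 0)) (1\<^sub>m n)"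
      by (rule eq_matI) (auto simp: W_def toeplitz_def K_def)
    also have "det \<dots> = det (toeplitz g n N) * det (1\<^sub>m n :: 'a mat)"
      by (rule det_four_block_mat_upper_right_zero) (auto simp: toeplitz_def)
    finally show ?thesis by simp
  qed
  have detP: "det P = (-1) ^ (n * N) * det (toeplitz a N n)"
  proof -
    have "det P = (-1) ^ (n * N)
        * det (mat (n + N) (n + N) (\<lambda>(i, j). P $$ (i, if j < n then j + N else j - n)))"
      by (rule det_swap_cols[OF P])
    also have "mat (n + N) (n + N) (\<lambda>(i, j). P $$ (i, if j < n then j + N else j - n))
        = four_block_mat (toeplitz a N n) (0\<^sub>m n N)
            (mat N n (\<lambda>(i, j). if n + i \<le> N + j then a (N + j - n - i) else 0)) (1\<^sub>m N)"
      by (rule eq_matI) (auto simp: P_def toeplitz_def K_def add_ac)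
    also have "det \<dots> = det (toeplitz a N n) * det (1\<^sub>m N :: 'a mat)"
      by (rule det_four_block_mat_upper_right_zero) (auto simp: toeplitz_def)
    finally show ?thesis by simp
  qed
  have "toeplitz a 0 K * W = P"
    unfolding W_def P_def K_def by (rule unitriangular_toeplitz_mult[OF conv])
  then have "(-1) ^ (n * N) * det (toeplitz a N n) = det (toeplitz g n N)"
    using det_mult[OF U W] det_toeplitz_0[of a K, OF a0] detW detP by simp
  then have "(-1) ^ (n * N) * ((-1) ^ (n * N) * det (toeplitz a N n))
      = (-1) ^ (n * N) * det (toeplitz g n N)"
    by simp
  then show ?thesis
    by (simp add: mult.assoc[symmetric] power_mult_distrib[symmetric])
qed

lemma det_four_block_mat_schur:
  fixes A B C D Ai :: "'a :: field mat"
  assumes A: "A \<in> carrier_mat n n" and B: "B \<in> carrier_mat n m" and C: "C \<in> carrier_mat m n"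
    and D: "D \<in> carrier_mat m m" and Ai: "Ai \<in> carrier_mat n n" and inv: "Ai * A = 1\<^sub>m n"
  shows "det (four_block_mat A B C D) = det A * det (D - C * Ai * B)"
proof -
  define Q where "Q = four_block_mat (1\<^sub>m n) (0\<^sub>m n m) (- (C * Ai)) (1\<^sub>m m)"
  have CAi: "C * Ai \<in> carrier_mat m n" using C Ai by (rule mult_carrier_mat)
  have CAiB: "C * Ai * B \<in> carrier_mat m m" using CAi B by (rule mult_carrier_mat)
  have Q: "Q \<in> carrier_mat (n + m) (n + m)" by (simp add: Q_def)
  have M: "four_block_mat A B C D \<in> carrier_mat (n + m) (n + m)" using A D by (rule four_block_carrier_mat)
  have "Q * four_block_mat A B C D
      = four_block_mat (1\<^sub>m n * A + 0\<^sub>m n m * C) (1\<^sub>m n * B + 0\<^sub>m n m * D)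
          (- (C * Ai) * A + 1\<^sub>m m * C) (- (C * Ai) * B + 1\<^sub>m m * D)"
    unfolding Q_def
    by (rule mult_four_block_mat[OF one_carrier_mat zero_carrier_mat uminus_carrier_mat[OF CAi]
          one_carrier_mat A B C D])
  also have "\<dots> = four_block_mat A B (0\<^sub>m m n) (D - C * Ai * B)"
  proof -
    have "- (C * Ai) * A = - C"
      using assoc_mult_mat[OF C Ai A] inv C Ai A by (simp add: uminus_mult_left_mat)
    moreover have "- (C * Ai) * B = - (C * Ai * B)"
      by (rule uminus_mult_left_mat) (use Ai B in simp)
    moreover have "- (C * Ai * B) + D = D - C * Ai * B"
      using CAiB D by (simp add: comm_add_mat add_uminus_minus_mat)
    ultimately show ?thesis
      using A B C D by simp
  qed
  finally have QM: "Q * four_block_mat A B C D = four_block_mat A B (0\<^sub>m m n) (D - C * Ai * B)" .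
  have "det Q = 1"
    unfolding Q_def using det_four_block_mat_upper_right_zero[OF one_carrier_mat refl
        uminus_carrier_mat[OF CAi] one_carrier_mat] by simp
  then have "det (four_block_mat A B C D) = det (Q * four_block_mat A B C D)"
    using det_mult[OF Q M] by simp
  also have "\<dots> = det A * det (D - C * Ai * B)" unfolding QM
    by (rule det_four_block_mat_lower_left_zero[OF A B refl minus_carrier_mat[OF CAiB]])
  finally show ?thesis .
qed

lemma det_2x2:
  fixes S :: "'a :: idom mat"
  assumes S: "S \<in> carrier_mat 2 2"
  shows "det S = S $$ (0, 0) * S $$ (1, 1) - S $$ (0, 1) * S $$ (1, 0)"
proof -
  define a where "a = mat 1 1 (\<lambda>_. S $$ (0, 0))"
  define b where "b = mat 1 1 (\<lambda>_. S $$ (0, 1))"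
  define c where "c = mat 1 1 (\<lambda>_. S $$ (1, 0))"
  define d where "d = mat 1 1 (\<lambda>_. S $$ (1, 1))"
  have "S = four_block_mat a b c d"
    by (rule eq_matI) (use S in \<open>auto simp: a_def b_def c_def d_def less_Suc_eq\<close>)
  moreover have "det (four_block_mat a b c d) = det (a * d - b * c)"
    by (rule det_four_block_mat)
      (auto simp: a_def b_def c_def d_def intro!: eq_matI simp: scalar_prod_def)
  moreover have "det (a * d - b * c) = (a * d - b * c) $$ (0, 0)"
    by (rule det_single) (auto simp: a_def b_def c_def d_def)
  ultimately show ?thesis
    by (auto simp: a_def b_def c_def d_def scalar_prod_def)
qed

lemma det_four_block_mat_bordered:
  fixes A Ai B C D :: "'a :: field mat"
  assumes A: "A \<in> carrier_mat n n" and Ai: "Ai \<in> carrier_mat n n" and inv: "Ai * A = 1\<^sub>m n"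
    and B: "B \<in> carrier_mat n k" and C: "C \<in> carrier_mat k n" and D: "D \<in> carrier_mat k k"
    and p: "p < k" and q: "q < k"
  shows "det (four_block_mat A (mat n 1 (\<lambda>(i, _). B $$ (i, q))) (mat 1 n (\<lambda>(_, j). C $$ (p, j)))
              (mat 1 1 (\<lambda>_. D $$ (p, q))))
       = det A * (D - C * Ai * B) $$ (p, q)"
proof -
  define Bq where "Bq = mat n 1 (\<lambda>(i, _). B $$ (i, q))"
  define Cp where "Cp = mat 1 n (\<lambda>(_, j). C $$ (p, j))"
  define Dpq where "Dpq = mat 1 1 (\<lambda>_. D $$ (p, q))"
  have Bq: "Bq \<in> carrier_mat n 1" and Cp: "Cp \<in> carrier_mat 1 n" and Dpq: "Dpq \<in> carrier_mat 1 1"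
    by (auto simp: Bq_def Cp_def Dpq_def)
  have CAi: "C * Ai \<in> carrier_mat k n" and CpAi: "Cp * Ai \<in> carrier_mat 1 n"
    using C Cp Ai by auto
  have CAiB: "Cp * Ai * Bq \<in> carrier_mat 1 1" using CpAi Bq by auto
  have CpAi_row: "(Cp * Ai) $$ (0, t) = (C * Ai) $$ (p, t)" if "t < n" for t
    using index_mult_mat_sum[OF Cp Ai _ that] index_mult_mat_sum[OF C Ai p that]
    by (simp add: Cp_def)
  have "(Cp * Ai * Bq) $$ (0, 0) = (\<Sum>t<n. (Cp * Ai) $$ (0, t) * Bq $$ (t, 0))"
    by (rule index_mult_mat_sum[OF CpAi Bq]) auto
  also have "\<dots> = (\<Sum>t<n. (C * Ai) $$ (p, t) * B $$ (t, q))"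
    by (rule sum.cong) (auto simp: CpAi_row Bq_def)
  also have "\<dots> = (C * Ai * B) $$ (p, q)"
    by (rule index_mult_mat_sum[OF CAi B p q, symmetric])
  finally have entry: "(Cp * Ai * Bq) $$ (0, 0) = (C * Ai * B) $$ (p, q)" .
  have "det (four_block_mat A Bq Cp Dpq) = det A * det (Dpq - Cp * Ai * Bq)"
    by (rule det_four_block_mat_schur[OF A Bq Cp Dpq Ai inv])
  also have "det (Dpq - Cp * Ai * Bq) = (Dpq - Cp * Ai * Bq) $$ (0, 0)"
    by (rule det_single) (rule minus_carrier_mat[OF CAiB])
  also have "\<dots> = Dpq $$ (0, 0) - (Cp * Ai * Bq) $$ (0, 0)"
    using CAiB by (intro index_minus_mat) auto
  also have "\<dots> = (D - C * Ai * B) $$ (p, q)"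
    unfolding entry using C Ai B p q by (simp add: Dpq_def)
  finally show ?thesis by (simp add: Bq_def Cp_def Dpq_def)
qed

definition bordered_submat :: "'a mat \<Rightarrow> nat \<Rightarrow> nat \<Rightarrow> nat \<Rightarrow> 'a mat" where
  "bordered_submat M n p q
     = mat (n + 1) (n + 1) (\<lambda>(i, j). M $$ (if i < n then i else n + p, if j < n then j else n + q))"

text \<open>Desnanot--Jacobi identity, with the condensation taken along the last two rows and columns.
  Both sides are computed through the \<open>2 \<times> 2\<close> Schur complement of the leading block.\<close>
lemma desnanot_jacobi:
  fixes M :: "'a :: field mat"
  assumes M: "M \<in> carrier_mat (n + 2) (n + 2)"
    and nz: "det (mat n n (\<lambda>(i, j). M $$ (i, j))) \<noteq> 0"
  shows "det M * det (mat n n (\<lambda>(i, j). M $$ (i, j)))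
       = det (bordered_submat M n 0 0) * det (bordered_submat M n 1 1)
         - det (bordered_submat M n 0 1) * det (bordered_submat M n 1 0)"
proof -
  define A where "A = mat n n (\<lambda>(i, j). M $$ (i, j))"
  define B where "B = mat n 2 (\<lambda>(i, j). M $$ (i, n + j))"
  define C where "C = mat 2 n (\<lambda>(i, j). M $$ (n + i, j))"
  define D where "D = mat 2 2 (\<lambda>(i, j). M $$ (n + i, n + j))"
  define Ai where "Ai = (1 / det A) \<cdot>\<^sub>m adj_mat A"
  have A: "A \<in> carrier_mat n n" and B: "B \<in> carrier_mat n 2" and C: "C \<in> carrier_mat 2 n"
    and D: "D \<in> carrier_mat 2 2" by (auto simp: A_def B_def C_def D_def)
  have Ai: "Ai \<in> carrier_mat n n" unfolding Ai_def using adj_mat(1)[OF A] by simp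
  have inv: "Ai * A = 1\<^sub>m n"
  proof -
    have "Ai * A = (1 / det A) \<cdot>\<^sub>m (adj_mat A * A)" unfolding Ai_def
      by (rule mult_smult_assoc_mat[OF adj_mat(1)[OF A] A])
    also have "\<dots> = 1\<^sub>m n" using adj_mat(3)[OF A] nz by (intro eq_matI) (auto simp: A_def)
    finally show ?thesis .
  qed
  define S where "S = D - C * Ai * B"
  have S: "S \<in> carrier_mat 2 2"
    unfolding S_def using mult_carrier_mat[OF mult_carrier_mat[OF C Ai] B] by (rule minus_carrier_mat)
  have detM: "det M = det A * det S"
  proof -
    have "M = four_block_mat A B C D"
      by (rule eq_matI) (use M in \<open>auto simp: A_def B_def C_def D_def\<close>)
    then show ?thesis using det_four_block_mat_schur[OF A B C D Ai inv] by (simp add: S_def)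
  qed
  have bordered: "det (bordered_submat M n p q) = det A * S $$ (p, q)" if "p < 2" "q < 2" for p q
  proof -
    have "bordered_submat M n p q = four_block_mat A (mat n 1 (\<lambda>(i, _). B $$ (i, q)))
        (mat 1 n (\<lambda>(_, j). C $$ (p, j))) (mat 1 1 (\<lambda>_. D $$ (p, q)))"
      by (rule eq_matI) (use that in \<open>auto simp: bordered_submat_def A_def B_def C_def D_def\<close>)
    then show ?thesis
      using det_four_block_mat_bordered[OF A Ai inv B C D that] by (simp add: S_def)
  qed
  have "det M * det A = (det A * S $$ (0, 0)) * (det A * S $$ (1, 1))
      - (det A * S $$ (0, 1)) * (det A * S $$ (1, 0))"
    unfolding detM det_2x2[OF S] by (simp add: algebra_simps)
  then show ?thesis using bordered by (simp add: A_def)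
qed

definition hankel :: "(nat \<Rightarrow> 'a :: comm_ring_1) \<Rightarrow> nat \<Rightarrow> nat \<Rightarrow> 'a" where
  "hankel f s n = det (mat n n (\<lambda>(i, j). f (i + j + s)))"

lemma det_rotate_initial_rows:
  fixes F :: "nat \<Rightarrow> nat \<Rightarrow> 'a :: comm_ring_1"
  assumes "n + 1 \<le> m"
  shows "det (mat m m (\<lambda>(i, j). F i j)) = (-1) ^ n * det (mat m m (\<lambda>(i, j).
     F (if i < n then i + 1 else if i < 1 + n then i - n else i) j))"
proof -
  let ?s = "\<lambda>i. if i < n then i + 1 else if i < 1 + n then i - n else i"
  have "det (mat m m (\<lambda>(i, j). F i j))
      = (-1) ^ (1 * n) * det (mat m m (\<lambda>(i, j). mat m m (\<lambda>(i, j). F i j) $$ (?s i, j)))"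
    by (rule det_swap_initial_rows) (use assms in simp_all)
  also have "mat m m (\<lambda>(i, j). mat m m (\<lambda>(i, j). F i j) $$ (?s i, j)) = mat m m (\<lambda>(i, j). F (?s i) j)"
    by (rule eq_matI) (use assms in auto)
  finally show ?thesis by simp
qed

lemma det_rotate_initial_cols:
  fixes F :: "nat \<Rightarrow> nat \<Rightarrow> 'a :: comm_ring_1"
  assumes "n + 1 \<le> m"
  shows "det (mat m m (\<lambda>(i, j). F i j)) = (-1) ^ n * det (mat m m (\<lambda>(i, j).
     F i (if j < n then j + 1 else if j < 1 + n then j - n else j)))"
proof -
  let ?s = "\<lambda>i. if i < n then i + 1 else if i < 1 + n then i - n else i"
  have "det (mat m m (\<lambda>(i, j). F i j))
      = (-1) ^ (1 * n) * det (mat m m (\<lambda>(i, j). mat m m (\<lambda>(i, j). F i j) $$ (i, ?s j)))"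
    by (rule det_swap_initial_cols) (use assms in simp_all)
  also have "mat m m (\<lambda>(i, j). mat m m (\<lambda>(i, j). F i j) $$ (i, ?s j)) = mat m m (\<lambda>(i, j). F i (?s j))"
    by (rule eq_matI) (use assms in auto)
  finally show ?thesis by simp
qed

text \<open>Condensation for Hankel determinants: apply \<open>desnanot_jacobi\<close> after rotating row and column
  \<open>0\<close> of \<open>(f\<^sub>i\<^sub>+\<^sub>j)\<^sub>i\<^sub>,\<^sub>j\<^sub>\<le>\<^sub>n\<^sub>+\<^sub>1\<close> to position \<open>n\<close>, so that the retained interior block is \<open>(f\<^sub>i\<^sub>+\<^sub>j\<^sub>+\<^sub>2)\<close>.\<close>
lemma hankel_condensation:
  fixes f :: "nat \<Rightarrow> 'a :: field"
  assumes nz: "hankel f 2 n \<noteq> 0"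
  shows "hankel f 0 (n + 2) * hankel f 2 n
       = hankel f 0 (n + 1) * hankel f 2 (n + 1) - hankel f 1 (n + 1) ^ 2"
proof -
  let ?s = "\<lambda>i. if i < n then i + 1 else if i < 1 + n then i - n else i"
  define M where "M = mat (n + 2) (n + 2) (\<lambda>(i, j). f (?s i + ?s j))"
  have rotate_both: "det (mat k k (\<lambda>(i, j). F i j)) = det (mat k k (\<lambda>(i, j). F (?s i) (?s j)))"
    if "n + 1 \<le> k" for k and F :: "nat \<Rightarrow> nat \<Rightarrow> 'a"
    using det_rotate_initial_rows[OF that, of F] det_rotate_initial_cols[OF that, of "\<lambda>i. F (?s i)"]
    by (simp add: power_mult_distrib[symmetric] mult.assoc[symmetric])
  have "hankel f 0 (n + 2) = det M"
    unfolding hankel_def M_def using rotate_both[of "n + 2" "\<lambda>i j. f (i + j)"] by simp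
  moreover have "mat n n (\<lambda>(i, j). M $$ (i, j)) = mat n n (\<lambda>(i, j). f (i + j + 2))"
    by (rule eq_matI) (auto simp: M_def)
  moreover have "det (bordered_submat M n 0 0) = hankel f 0 (n + 1)"
  proof -
    have "bordered_submat M n 0 0 = mat (n + 1) (n + 1) (\<lambda>(i, j). f (?s i + ?s j))"
      by (rule eq_matI) (auto simp: bordered_submat_def M_def less_Suc_eq)
    then show ?thesis unfolding hankel_def using rotate_both[of "n + 1" "\<lambda>i j. f (i + j)"] by simp
  qed
  moreover have "det (bordered_submat M n 0 1) = (-1) ^ n * hankel f 1 (n + 1)"
  proof -
    have "bordered_submat M n 0 1 = mat (n + 1) (n + 1) (\<lambda>(i, j). f (?s i + j + 1))"
      by (rule eq_matI) (auto simp: bordered_submat_def M_def less_Suc_eq)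
    then show ?thesis
      unfolding hankel_def using det_rotate_initial_rows[of n "n + 1" "\<lambda>i j. f (i + j + 1)"] by simp
  qed
  moreover have "det (bordered_submat M n 1 0) = (-1) ^ n * hankel f 1 (n + 1)"
  proof -
    have "bordered_submat M n 1 0 = mat (n + 1) (n + 1) (\<lambda>(i, j). f (i + ?s j + 1))"
      by (rule eq_matI) (auto simp: bordered_submat_def M_def less_Suc_eq)
    then show ?thesis
      unfolding hankel_def using det_rotate_initial_cols[of n "n + 1" "\<lambda>i j. f (i + j + 1)"] by simp
  qed
  moreover have "bordered_submat M n 1 1 = mat (n + 1) (n + 1) (\<lambda>(i, j). f (i + j + 2))"
    by (rule eq_matI) (auto simp: bordered_submat_def M_def less_Suc_eq)
  moreover have "M \<in> carrier_mat (n + 2) (n + 2)" by (simp add: M_def)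
  ultimately show ?thesis
    using desnanot_jacobi[of M n] nz
    by (simp add: hankel_def power2_eq_square algebra_simps power_mult_distrib[symmetric])
qed

section \<open>The product \<^const>\<open>pm\<close> and the Catalan Hankel determinants\<close>

definition pm_ratio :: "nat \<Rightarrow> complex \<Rightarrow> complex" where
  "pm_ratio a z = (\<Prod>i\<in>{1..a}. (2 * z + of_nat i + of_nat a) / (of_nat i + of_nat a))"

lemma pm_Suc: "pm (Suc a) z = pm a z * pm_ratio a z"
proof -
  let ?f = "\<lambda>(i, j). (2 * z + of_nat i + of_nat j) / (of_nat i + of_nat (j :: nat)) :: complex"
  let ?S = "{(i, j). 1 \<le> i \<and> i \<le> j \<and> j \<le> a - 1}"
  have fin: "finite ?S" by (rule finite_subset[of _ "{1..a} \<times> {1..a}"]) auto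
  have "{(i, j). 1 \<le> i \<and> i \<le> j \<and> j \<le> Suc a - 1} = ?S \<union> (\<lambda>i. (i, a)) ` {1..a}"
    by auto
  then have "pm (Suc a) z = prod ?f (?S \<union> (\<lambda>i. (i, a)) ` {1..a})"
    unfolding pm_def by simp
  also have "\<dots> = prod ?f ?S * prod ?f ((\<lambda>i. (i, a)) ` {1..a})"
    by (rule prod.union_disjoint) (use fin in auto)
  also have "prod ?f ((\<lambda>i. (i, a)) ` {1..a}) = pm_ratio a z"
    by (subst prod.reindex) (auto simp: inj_on_def pm_ratio_def)
  finally show ?thesis by (simp add: pm_def)
qed

lemma pm_0: "pm 0 z = 1"
  unfolding pm_def by (rule prod.neutral) auto

lemma pm_ratio_pochhammer:
  "pm_ratio a z = pochhammer (2 * z + of_nat a + 1) a / pochhammer (of_nat a + 1) a"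
proof -
  have "pm_ratio a z = (\<Prod>i<a. (2 * z + of_nat (Suc i) + of_nat a) / (of_nat (Suc i) + of_nat a))"
    unfolding pm_ratio_def One_nat_def by (rule prod.atLeast1_atMost_eq)
  also have "\<dots> = (\<Prod>i<a. (2 * z + of_nat a + 1) + of_nat i) / (\<Prod>i<a. (of_nat a + 1) + of_nat i)"
    by (simp add: prod_dividef algebra_simps)
  finally show ?thesis
    by (simp add: pochhammer_prod atLeast0LessThan)
qed

lemma pochhammer_add_2_rec: "pochhammer c (n + 2) = c * (c + 1) * pochhammer (c + 2) n"
  for c :: "'a :: comm_semiring_1"
proof -
  have "c + 1 + 1 = c + 2" by (simp add: add.assoc one_add_one)
  then show ?thesis by (simp add: pochhammer_rec numeral_2_eq_2 mult.assoc)
qed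

lemma pochhammer_add_2: "pochhammer c (n + 2) = pochhammer c n * (c + of_nat n) * (c + of_nat n + 1)"
  for c :: "'a :: comm_semiring_1"
  by (simp add: pochhammer_Suc numeral_2_eq_2 algebra_simps)

lemma pochhammer_of_nat_nonzero: "m > 0 \<Longrightarrow> pochhammer (of_nat m) n \<noteq> (0 :: complex)"
  unfolding pochhammer_of_nat of_nat_eq_0_iff using pochhammer_pos[of m n] by simp

lemma pm_ratio_shift:
  "pm_ratio a (z + 1) * ((2 * z + of_nat a + 1) * (2 * z + of_nat a + 2))
     = pm_ratio a z * ((2 * z + 2 * of_nat a + 1) * (2 * z + 2 * of_nat a + 2))"
proof -
  let ?c = "2 * z + of_nat a + 1"
  have "pochhammer (?c + 2) a * (?c * (?c + 1)) = pochhammer ?c (a + 2)"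
    unfolding pochhammer_add_2_rec by (simp only: mult_ac)
  also have "\<dots> = pochhammer ?c a * ((2 * z + 2 * of_nat a + 1) * (2 * z + 2 * of_nat a + 2))"
    unfolding pochhammer_add_2 by (simp add: algebra_simps)
  finally have "pochhammer (2 * (z + 1) + of_nat a + 1) a * (?c * (2 * z + of_nat a + 2))
      = pochhammer ?c a * ((2 * z + 2 * of_nat a + 1) * (2 * z + 2 * of_nat a + 2))"
    by (simp add: algebra_simps)
  then show ?thesis
    unfolding pm_ratio_pochhammer by (simp only: times_divide_eq_left)
qed

lemma pm_ratio_Suc:
  "pm_ratio (Suc a) z * ((2 * z + of_nat a + 1) * (2 * of_nat a + 1) * (2 * of_nat a + 2))
     = pm_ratio a z * ((2 * z + 2 * of_nat a + 1) * (2 * z + 2 * of_nat a + 2) * (of_nat a + 1))"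
proof -
  define P1 where "P1 = pochhammer (2 * z + of_nat a + 1) a"
  define P2 where "P2 = pochhammer (2 * z + of_nat (Suc a) + 1) (Suc a)"
  define Q1 where "Q1 = pochhammer (of_nat (Suc a) :: complex) a"
  define Q2 where "Q2 = pochhammer (of_nat (Suc (Suc a)) :: complex) (Suc a)"
  have Q1: "Q1 \<noteq> 0" and Q2: "Q2 \<noteq> 0"
    unfolding Q1_def Q2_def by (intro pochhammer_of_nat_nonzero zero_less_Suc)+
  have P: "(2 * z + of_nat a + 1) * P2 = P1 * ((2 * z + 2 * of_nat a + 1) * (2 * z + 2 * of_nat a + 2))"
  proof -
    have "(2 * z + of_nat a + 1) * P2 = pochhammer (2 * z + of_nat a + 1) (a + 2)"
      unfolding P2_def by (simp add: pochhammer_rec add_ac)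
    then show ?thesis
      unfolding P1_def pochhammer_add_2 by (simp add: algebra_simps)
  qed
  have Q: "(of_nat a + 1) * Q2 = Q1 * ((2 * of_nat a + 1) * (2 * of_nat a + 2))"
  proof -
    have "(of_nat a + 1) * Q2 = pochhammer (of_nat (Suc a) :: complex) (a + 2)"
      unfolding Q2_def by (simp add: pochhammer_rec add_ac)
    then show ?thesis
      unfolding Q1_def pochhammer_add_2 by (simp add: algebra_simps)
  qed
  have "pm_ratio (Suc a) z * ((2 * z + of_nat a + 1) * (2 * of_nat a + 1) * (2 * of_nat a + 2)) * Q1 * Q2
      = ((2 * z + of_nat a + 1) * P2) * ((2 * of_nat a + 1) * (2 * of_nat a + 2) * Q1)"
    using Q2 unfolding Q2_def by (simp add: pm_ratio_pochhammer P2_def add_ac)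
  also have "\<dots> = P1 * ((2 * z + 2 * of_nat a + 1) * (2 * z + 2 * of_nat a + 2)) * ((of_nat a + 1) * Q2)"
    unfolding P Q by (simp only: mult_ac)
  also have "\<dots> = pm_ratio a z * ((2 * z + 2 * of_nat a + 1) * (2 * z + 2 * of_nat a + 2) * (of_nat a + 1)) * Q1 * Q2"
    using Q1 unfolding Q1_def by (simp add: pm_ratio_pochhammer P1_def add_ac)
  finally show ?thesis using Q1 Q2 by simp
qed

lemma pm_shift:
  fixes N b :: nat
  defines "z \<equiv> (of_nat N :: complex)"
  shows "pm (Suc b) (z + 1) * pochhammer (2 * z + 2) b = pm (Suc b) z * pochhammer (2 * z + of_nat b + 3) b"
proof (induction b)
  case 0
  then show ?case by (simp add: pm_Suc pm_0 pm_ratio_def)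
next
  case (Suc b)
  have nz: "2 * z + of_nat b + 3 \<noteq> 0"
    using of_nat_eq_0_iff[of "2 * N + b + 3", where 'a = complex] by (simp add: z_def)
  have "(pm (Suc (Suc b)) (z + 1) * pochhammer (2 * z + 2) (Suc b)) * (2 * z + of_nat b + 3)
      = (pm (Suc b) (z + 1) * pochhammer (2 * z + 2) b)
        * (pm_ratio (Suc b) (z + 1) * ((2 * z + of_nat (Suc b) + 1) * (2 * z + of_nat (Suc b) + 2)))"
    by (simp add: pm_Suc pochhammer_Suc algebra_simps)
  also have "\<dots> = pm (Suc b) z * pochhammer (2 * z + of_nat b + 3) b
      * (pm_ratio (Suc b) z * ((2 * z + 2 * of_nat (Suc b) + 1) * (2 * z + 2 * of_nat (Suc b) + 2)))"
    unfolding Suc.IH pm_ratio_shift ..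
  also have "\<dots> = pm (Suc b) z * pm_ratio (Suc b) z * pochhammer (2 * z + of_nat b + 3) (b + 2)"
    unfolding pochhammer_add_2 by (simp add: algebra_simps)
  also have "\<dots> = (pm (Suc (Suc b)) z * pochhammer (2 * z + of_nat (Suc b) + 3) (Suc b)) * (2 * z + of_nat b + 3)"
    by (simp add: pm_Suc pochhammer_rec algebra_simps)
  finally show ?case using nz by simp
qed

lemma pm_ratio_of_nat_nonzero: "pm_ratio a (of_nat N) \<noteq> 0"
proof -
  have "pochhammer (2 * of_nat N + of_nat a + 1 :: complex) a \<noteq> 0"
    using pochhammer_of_nat_nonzero[of "2 * N + a + 1" a] by (simp add: add_ac)
  moreover have "pochhammer (of_nat a + 1 :: complex) a \<noteq> 0"
    using pochhammer_of_nat_nonzero[of "a + 1" a] by (simp add: add_ac)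
  ultimately show ?thesis
    unfolding pm_ratio_pochhammer by simp
qed

lemma pm_of_nat_nonzero: "pm k (of_nat N) \<noteq> 0"
  by (induction k) (auto simp: pm_0 pm_Suc pm_ratio_of_nat_nonzero)

lemma pm_ratio_Suc_diff:
  "pm_ratio (Suc a) z * (2 * z * (2 * z + 1))
     = (pm_ratio (Suc a) z - pm_ratio a z) * ((2 * z + 2 * of_nat a + 1) * (2 * z + 2 * of_nat a + 2))"
proof -
  have a1: "(of_nat a + 1 :: complex) \<noteq> 0"
    using of_nat_eq_0_iff[of "Suc a", where 'a = complex] by (simp add: add.commute)
  have "(pm_ratio a z * ((2 * z + 2 * of_nat a + 1) * (2 * z + 2 * of_nat a + 2))) * (of_nat a + 1)
      = (pm_ratio (Suc a) z * (2 * (2 * z + of_nat a + 1) * (2 * of_nat a + 1))) * (of_nat a + 1)"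
    using pm_ratio_Suc[of a z] by (simp add: algebra_simps)
  then have "pm_ratio a z * ((2 * z + 2 * of_nat a + 1) * (2 * z + 2 * of_nat a + 2))
      = pm_ratio (Suc a) z * (2 * (2 * z + of_nat a + 1) * (2 * of_nat a + 1))"
    using a1 by simp
  then show ?thesis
    by (simp add: algebra_simps)
qed

lemma pm_condensation:
  fixes n k :: nat
  defines "y \<equiv> (of_nat n :: complex)"
  shows "pm k (y + 2) * pm (k + 2) y = pm k (y + 1) * pm (k + 2) (y + 1) - pm (k + 1) (y + 1) ^ 2"
proof (cases k)
  case 0
  have "pm (Suc 0) z = 1" and "pm (Suc (Suc 0)) z = z + 1" for z
    by (simp_all add: pm_Suc pm_0 pm_ratio_def field_simps)
  then show ?thesis using 0 by (simp add: pm_0 numeral_2_eq_2)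
next
  case (Suc b)
  define u where "u = pm (Suc b) (y + 1)"
  define r where "r = pm_ratio (Suc b) (y + 1)"
  define r2 where "r2 = pm_ratio (Suc (Suc b)) (y + 1)"
  define P where "P = pochhammer (2 * y + 4) b"
  define P' where "P' = pochhammer (2 * y + of_nat b + 5) b"
  define X where "X = (2 * y + 2 * of_nat b + 5) * (2 * y + 2 * of_nat b + 6)"
  have "P \<noteq> 0"
    using pochhammer_of_nat_nonzero[of "2 * n + 4" b] by (simp add: P_def y_def)
  moreover have "P' \<noteq> 0"
    using pochhammer_of_nat_nonzero[of "2 * n + b + 5" b] by (simp add: P'_def y_def)
  moreover have "X \<noteq> 0"
    using of_nat_eq_0_iff[of "(2 * n + 2 * b + 5) * (2 * n + 2 * b + 6)", where 'a = complex]
    by (simp add: X_def y_def)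
  ultimately have nz: "P * P' * X \<noteq> 0" by simp
  have shift_k: "pm (Suc b) (y + 2) * P = u * P'"
    using pm_shift[of b "Suc n"] by (simp add: u_def P_def P'_def y_def algebra_simps)
  have shift_k2: "u * r * r2 * ((2 * y + 2) * (2 * y + 3) * P) = pm (Suc (Suc (Suc b))) y * (P' * X)"
  proof -
    have "pochhammer (2 * y + 2) (Suc (Suc b)) = (2 * y + 2) * (2 * y + 3) * P"
      using pochhammer_add_2_rec[of "2 * y + 2" b] by (simp add: P_def algebra_simps numeral_2_eq_2)
    moreover have "pochhammer (2 * y + of_nat (Suc (Suc b)) + 3) (Suc (Suc b)) = P' * X"
      using pochhammer_add_2[of "2 * y + of_nat b + 5" b]
      by (simp add: P'_def X_def algebra_simps numeral_2_eq_2)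
    ultimately show ?thesis
      using pm_shift[of "Suc (Suc b)" n]
      by (simp add: u_def r_def r2_def pm_Suc y_def mult.assoc)
  qed
  have ratio: "r2 * ((2 * y + 2) * (2 * y + 3)) = (r2 - r) * X"
    using pm_ratio_Suc_diff[of "Suc b" "y + 1"] by (simp add: r_def r2_def X_def algebra_simps)
  have "pm (Suc b) (y + 2) * pm (Suc (Suc (Suc b))) y * (P * P' * X)
      = (pm (Suc b) (y + 2) * P) * (pm (Suc (Suc (Suc b))) y * (P' * X))"
    by (simp add: mult_ac)
  also have "\<dots> = u * u * r * (r2 * ((2 * y + 2) * (2 * y + 3))) * (P * P')"
    unfolding shift_k shift_k2[symmetric] by (simp add: mult_ac)
  also have "\<dots> = u * u * r * (r2 - r) * (P * P' * X)"
    unfolding ratio by (simp add: mult_ac)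
  finally have "pm (Suc b) (y + 2) * pm (Suc (Suc (Suc b))) y = u * u * r * (r2 - r)"
    using nz by simp
  then show ?thesis
    by (simp add: Suc u_def r_def r2_def pm_Suc power2_eq_square algebra_simps)
qed

lemma catalan_eq_ballot: "catalan n = ballot n n"
  using fps_nth_catalan_fps_power[of n n] by (simp add: catalan_fps_def)

lemma Suc_times_catalan: "of_nat (Suc k) * catalan k = of_nat ((2 * k) choose k)"
proof (cases k)
  case (Suc j)
  have t: "catalan k = of_nat ((2 * k) choose k) - of_nat ((2 * k) choose j)"
    using catalan_eq_ballot[of k] by (simp add: ballot_def Suc mult_2 del: binomial_Suc_Suc)
  have "Suc j * (2 * k choose Suc j) = Suc (Suc j) * (2 * k choose j)"
    using Suc_times_binomial_add[of j "Suc j"] Suc by (simp add: mult_2)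
  then have "of_nat (Suc k) * of_nat ((2 * k) choose j) = (of_nat (k * ((2 * k) choose k)) :: complex)"
    unfolding Suc by (simp only: of_nat_mult[symmetric])
  then show ?thesis
    unfolding t by (simp add: algebra_simps del: binomial_Suc_Suc)
qed simp

lemma Suc_times_central_binomial_Suc:
  "Suc k * ((2 * Suc k) choose Suc k) = 2 * (2 * k + 1) * ((2 * k) choose k)"
proof -
  have a: "Suc k * ((2 * Suc k) choose Suc k) = Suc (2 * k + 1) * ((2 * k + 1) choose k)"
  proof -
    have "2 * Suc k = Suc (2 * k + 1)" by simp
    then show ?thesis by (simp only: Suc_times_binomial)
  qed
  have sym: "(2 * k + 1) choose k = (2 * k + 1) choose Suc k"
    using binomial_symmetric[of k "2 * k + 1"] by simp
  have b: "Suc k * ((2 * k + 1) choose Suc k) = (2 * k + 1) * ((2 * k) choose k)"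
    using Suc_times_binomial_eq[of "2 * k" k] by (simp add: mult.commute del: binomial_Suc_Suc)
  have "Suc k * (Suc k * ((2 * Suc k) choose Suc k)) = Suc (2 * k + 1) * (Suc k * ((2 * k + 1) choose Suc k))"
    unfolding a sym by (simp only: mult_ac)
  also have "\<dots> = Suc k * (2 * (2 * k + 1) * ((2 * k) choose k))" unfolding b by simp
  finally show ?thesis by (simp only: mult_cancel1) simp
qed

lemma catalan_Suc_mult: "catalan (Suc k) * (of_nat k + 2) = catalan k * (2 * (2 * of_nat k + 1))"
proof -
  have "catalan (Suc k) * (of_nat k + 2) * of_nat (Suc k) = of_nat (Suc k) * (of_nat (Suc (Suc k)) * catalan (Suc k))"
    by (simp add: algebra_simps)
  also have "\<dots> = of_nat (Suc k * ((2 * Suc k) choose Suc k))"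
    unfolding Suc_times_catalan by (simp only: of_nat_mult)
  also have "\<dots> = of_nat (2 * (2 * k + 1)) * (of_nat (Suc k) * catalan k)"
    unfolding Suc_times_central_binomial_Suc Suc_times_catalan by (simp only: of_nat_mult)
  also have "\<dots> = catalan k * (2 * (2 * of_nat k + 1)) * of_nat (Suc k)"
    by (simp add: algebra_simps)
  finally show ?thesis by (simp del: of_nat_Suc)
qed

lemma pm_ratio_at_0: "pm_ratio a 0 = 1"
  unfolding pm_ratio_def
proof (rule prod.neutral, rule ballI)
  fix i assume "i \<in> {1..a}"
  then have "(of_nat i + of_nat a :: complex) \<noteq> 0"
    using of_nat_eq_0_iff[of "i + a", where 'a = complex] by simp
  then show "(2 * 0 + of_nat i + of_nat a) / (of_nat i + of_nat a) = (1 :: complex)"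
    by simp
qed

lemma pm_at_0: "pm k 0 = 1"
  by (induction k) (simp_all add: pm_0 pm_Suc pm_ratio_at_0)

lemma pm_at_1: "pm k 1 = catalan k"
proof (induction k)
  case 0
  then show ?case by (simp add: pm_0)
next
  case (Suc k)
  have nz: "(of_nat k + 2 :: complex) \<noteq> 0"
    using of_nat_eq_0_iff[of "k + 2", where 'a = complex] by (simp add: add.commute)
  have "pm_ratio k 1 * (of_nat k + 2) * (of_nat k + 1) = (2 * (2 * of_nat k + 1)) * (of_nat k + 1)"
    using pm_ratio_shift[of k 0] by (simp add: pm_ratio_at_0 algebra_simps)
  moreover have "(of_nat k + 1 :: complex) \<noteq> 0"
    using of_nat_eq_0_iff[of "k + 1", where 'a = complex] by (simp add: add.commute)
  ultimately have "pm_ratio k 1 * (of_nat k + 2) = 2 * (2 * of_nat k + 1)"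
    by simp
  then have "pm (Suc k) 1 * (of_nat k + 2) = catalan (Suc k) * (of_nat k + 2)"
    by (simp add: pm_Suc Suc.IH catalan_Suc_mult mult.assoc)
  then show ?case using nz by simp
qed

lemma hankel_shift: "hankel (\<lambda>t. f (t + k)) s m = hankel f (k + s) m"
  unfolding hankel_def by (simp add: add_ac)

theorem hankel_catalan: "hankel catalan k N = pm k (of_nat N)"
proof (induction N arbitrary: k rule: less_induct)
  case (less N)
  consider "N = 0" | "N = 1" | n where "N = n + 2"
  proof (cases N)
    case (Suc M)
    with that show ?thesis by (cases M) auto
  qed (use that in auto)
  then show ?case
  proof cases
    case 1
    then show ?thesis by (simp add: hankel_def pm_at_0)
  next
    case 2
    have "hankel catalan k 1 = catalan k" unfolding hankel_def by (subst det_single) auto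
    then show ?thesis using 2 pm_at_1 by simp
  next
    case 3
    have IH: "hankel catalan j m = pm j (of_nat m)" if "m < N" for j m
      using less.IH[OF that] .
    have "hankel (\<lambda>t. catalan (t + k)) 2 n \<noteq> 0"
      unfolding hankel_shift using IH[of n] 3 pm_of_nat_nonzero by simp
    from hankel_condensation[OF this]
    have "hankel catalan k N * pm (k + 2) (of_nat n)
        = pm k (of_nat n + 1) * pm (k + 2) (of_nat n + 1) - pm (k + 1) (of_nat n + 1) ^ 2"
      unfolding hankel_shift using IH[of n] IH[of "n + 1"] 3 by (simp add: add_ac)
    also have "\<dots> = pm k (of_nat n + 2) * pm (k + 2) (of_nat n)"
      using pm_condensation[of k n] by simp
    finally show ?thesis using pm_of_nat_nonzero[of "k + 2" n] 3 by (simp add: add_ac)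
  qed
qed

lemma finite_pm_index_set: "finite {(i, j). 1 \<le> i \<and> i \<le> j \<and> j \<le> k - (1 :: nat)}"
  by (rule finite_subset[of _ "{1..k} \<times> {1..k}"]) auto

lemma card_pm_index_set: "card {(i, j). 1 \<le> i \<and> i \<le> j \<and> j \<le> k - (1 :: nat)} = (\<Sum>i<k. i)"
proof (induction k)
  case 0
  have "{(i, j). 1 \<le> i \<and> i \<le> j \<and> j \<le> 0 - (1 :: nat)} = {}" by auto
  then show ?case by (simp only:) simp
next
  case (Suc a)
  let ?T = "\<lambda>k. {(i, j). 1 \<le> i \<and> i \<le> j \<and> j \<le> k - (1 :: nat)}"
  have "?T (Suc a) = ?T a \<union> (\<lambda>i. (i, a)) ` {1..a}" and "?T a \<inter> (\<lambda>i. (i, a)) ` {1..a} = {}"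
    by auto
  then have "card (?T (Suc a)) = card (?T a) + card ((\<lambda>i. (i, a)) ` {1..a})"
    using finite_pm_index_set[of a] by (simp add: card_Un_disjoint)
  also have "card ((\<lambda>i. (i, a)) ` {1..a}) = a"
    by (subst card_image) (auto simp: inj_on_def)
  finally show ?case using Suc.IH by simp
qed

text \<open>The involution \<open>(i, j) \<mapsto> (m + 1 - j, m + 1 - i)\<close> of the index set turns each factor
  of \<^term>\<open>pm (m + 1) (- of_nat (N + m + 1))\<close> into minus a factor of \<^term>\<open>pm (m + 1) (of_nat N)\<close>.\<close>
lemma pm_reflect:
  "pm (m + 1) (- of_nat (N + m + 1)) = (-1) ^ (\<Sum>i<m + 1. i) * pm (m + 1) (of_nat N)"
proof -
  define S where "S = {(i, j). 1 \<le> i \<and> i \<le> j \<and> j \<le> m + 1 - (1 :: nat)}"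
  define h where "h = (\<lambda>(i :: nat, j :: nat). (m + 1 - j, m + 1 - i))"
  define num where "num = (\<lambda>x :: nat \<times> nat. 2 * of_nat N + of_nat (m + 1 - snd x) + (of_nat (m + 1 - fst x) :: complex))"
  define den where "den = (\<lambda>x :: nat \<times> nat. of_nat (fst x) + (of_nat (snd x) :: complex))"
  have pmS: "pm (m + 1) z = (\<Prod>(i, j)\<in>S. (2 * z + of_nat i + of_nat j) / (of_nat i + of_nat j))" for z
    by (simp add: pm_def S_def)
  have "pm (m + 1) (- of_nat (N + m + 1)) = (\<Prod>x\<in>S. (-1) * (num x / den x))"
    unfolding pmS
  proof (rule prod.cong)
    fix x assume "x \<in> S"
    then obtain i j where x: "x = (i, j)" and ij: "1 \<le> i" "i \<le> j" "j \<le> m" by (auto simp: S_def)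
    then show "(case x of (i, j) \<Rightarrow> (2 * - of_nat (N + m + 1) + of_nat i + of_nat j) / (of_nat i + of_nat j))
        = (-1) * (num x / den x)"
      by (simp add: num_def den_def of_nat_diff field_simps)
  qed simp
  also have "\<dots> = (\<Prod>x\<in>S. (-1 :: complex)) * ((\<Prod>x\<in>S. num x) / (\<Prod>x\<in>S. den x))"
    by (simp only: prod.distrib prod_dividef)
  also have "(\<Prod>x\<in>S. (-1 :: complex)) = (-1) ^ (\<Sum>i<m + 1. i)"
    using card_pm_index_set[of "m + 1"] by (simp add: S_def)
  also have "(\<Prod>x\<in>S. num x) = (\<Prod>(i, j)\<in>S. 2 * of_nat N + of_nat i + (of_nat j :: complex))"
    unfolding num_def
    by (rule prod.reindex_bij_witness[where i = h and j = h]) (auto simp: h_def S_def add_ac)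
  also have "(\<Prod>(i, j)\<in>S. 2 * of_nat N + of_nat i + (of_nat j :: complex)) / (\<Prod>x\<in>S. den x)
      = pm (m + 1) (of_nat N)"
    unfolding pmS den_def by (simp add: prod_dividef case_prod_unfold)
  finally show ?thesis .
qed

section \<open>Hankel determinants of \<^const>\<open>Mb\<close> at negative shifts\<close>

lemma Dm_neg_eq_0:
  assumes "1 \<le> n" "n \<le> m"
  shows "Dm (- int m) b n = 0"
proof -
  define H where "H = mat n n (\<lambda>(i, j). Mb b (- int m + int i + int j))"
  have H: "H \<in> carrier_mat n n" by (simp add: H_def)
  have "multrow 0 0 H = H"
    by (rule eq_matI) (use assms in \<open>auto simp: H_def Mb_def\<close>)
  then have "det H = 0 * det H"
    using det_multrow[OF _ H, of 0 0] assms by simp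
  then show ?thesis by (simp add: Dm_def H_def)
qed

lemma pm_neg_eq_0:
  assumes "1 \<le> n" "n \<le> m"
  shows "pm (m + 1) (- of_nat n) = 0"
proof -
  have "(n, n) \<in> {(i, j). 1 \<le> i \<and> i \<le> j \<and> j \<le> m + 1 - 1}"
    using assms by simp
  then show ?thesis
    unfolding pm_def by (intro prod_zero finite_pm_index_set bexI[of _ "(n, n)"]) simp_all
qed

lemma Dm_neg_eq_det_toeplitz:
  "Dm (- int m) b (N + m + 1)
     = (-1) ^ (\<Sum>i<N + m + 1. i) * det (toeplitz (\<lambda>t. Mb b (int t)) N (N + m + 1))"
proof -
  let ?n = "N + m + 1"
  have "Mb b (- int m + int (?n - 1 - i) + int j) = (if i \<le> N + j then Mb b (int (N + j - i)) else 0)"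
    if "i < ?n" for i j
  proof (cases "i \<le> N + j")
    case True
    with that have "- int m + int (?n - 1 - i) + int j = int (N + j - i)" by simp
    with True show ?thesis by (simp only: if_True)
  next
    case False
    with that have "- int m + int (?n - 1 - i) + int j < 0" by simp
    with False show ?thesis by (simp add: Mb_def)
  qed
  then have "toeplitz (\<lambda>t. Mb b (int t)) N ?n = mat ?n ?n (\<lambda>(i, j). Mb b (- int m + int (?n - 1 - i) + int j))"
    by (intro eq_matI) (simp_all add: toeplitz_def)
  then have "det (toeplitz (\<lambda>t. Mb b (int t)) N ?n) = (-1) ^ (\<Sum>i<?n. i) * Dm (- int m) b ?n"
    using det_reverse_rows[of ?n "\<lambda>i j. Mb b (- int m + int i + int j)"] by (simp add: Dm_def)
  then show ?thesis
    by (simp add: power_mult_distrib[symmetric])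
qed

lemma det_toeplitz_catalan_series:
  "det (toeplitz (fps_nth (1 - fps_const b * fps_X - fps_X * catalan_fps)) (N + m + 1) N)
     = (-1) ^ (N + (\<Sum>i<N. i)) * hankel catalan (m + 1) N"
proof -
  define C where "C = mat N N (\<lambda>(i, p). catalan (N + m + p - i))"
  have "toeplitz (fps_nth (1 - fps_const b * fps_X - fps_X * catalan_fps)) (N + m + 1) N = (-1) \<cdot>\<^sub>m C"
  proof (rule eq_matI)
    fix i p assume "i < dim_row ((-1) \<cdot>\<^sub>m C)" "p < dim_col ((-1) \<cdot>\<^sub>m C)"
    then have i: "i < N" and p: "p < N" by (auto simp: C_def)
    define l where "l = N + m + p - i - 1"
    have l: "N + m + p - i = Suc l" and l2: "N + m + 1 + p - i = Suc (Suc l)"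
      using i by (simp_all add: l_def)
    show "toeplitz (fps_nth (1 - fps_const b * fps_X - fps_X * catalan_fps)) (N + m + 1) N $$ (i, p)
        = ((-1) \<cdot>\<^sub>m C) $$ (i, p)"
      using i p by (simp add: toeplitz_def C_def catalan_fps_def l l2)
  qed (auto simp: toeplitz_def C_def)
  moreover have "C = mat N N (\<lambda>(i, j). catalan ((N - 1 - i) + j + (m + 1)))"
    by (rule eq_matI) (auto simp: C_def intro!: arg_cong[where f = catalan])
  ultimately show ?thesis
    using det_reverse_rows[of N "\<lambda>i j. catalan (i + j + (m + 1))"]
    by (simp add: hankel_def power_add)
qed

lemma sum_lessThan_add_nat: "(\<Sum>i<a + b. i) = (\<Sum>i<a. i) + (\<Sum>i<b. i) + a * (b :: nat)"
  by (induction b) auto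

lemma double_sum_lessThan_Suc: "2 * (\<Sum>i<Suc k. i) = k * Suc (k :: nat)"
  by (induction k) auto

lemma Dm_neg_eq_hankel_catalan:
  "Dm (- int m) b (N + m + 1) = (-1) ^ (\<Sum>i<m + 1. i) * hankel catalan (m + 1) N"
proof -
  let ?T = "\<lambda>k. \<Sum>i<k. i :: nat"
  let ?n = "N + m + 1"
  have dual: "det (toeplitz (\<lambda>t. Mb b (int t)) N ?n)
      = (-1) ^ (?n * N) * det (toeplitz (fps_nth (1 - fps_const b * fps_X - fps_X * catalan_fps)) ?n N)"
    by (rule det_toeplitz_dual[OF _ Mb_convolution]) (simp add: Mb_def)
  have sign: "?T ?n + ?n * N + (N + ?T N) = ?T (m + 1) + 2 * (?T N + N * (m + 1) + ?T (Suc N))"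
    using sum_lessThan_add_nat[of N "m + 1"] double_sum_lessThan_Suc[of N]
    by (simp add: algebra_simps)
  have "Dm (- int m) b ?n = (-1) ^ (?T ?n + ?n * N + (N + ?T N)) * hankel catalan (m + 1) N"
    unfolding Dm_neg_eq_det_toeplitz dual det_toeplitz_catalan_series
    by (simp only: power_add mult.assoc)
  also have "\<dots> = (-1) ^ ?T (m + 1) * hankel catalan (m + 1) N"
    unfolding sign by (simp add: power_add power_mult)
  finally show ?thesis .
qed

theorem theorem6:
  fixes b :: complex and m :: nat and n :: nat
  assumes "m \<ge> 1"
  shows "Dm (- int m) b n = pm (m + 1) (- of_nat n)"
proof -
  consider "n = 0" | "1 \<le> n" "n \<le> m" | N where "n = N + m + 1"
  proof (cases "n \<le> m")
    case True
    with that(1,2) show ?thesis by (cases "n = 0") auto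
  next
    case False
    with that(3)[of "n - m - 1"] show ?thesis by simp
  qed
  then show ?thesis
  proof cases
    case 1
    then show ?thesis by (simp add: Dm_def pm_at_0)
  next
    case 2
    show ?thesis
      by (simp only: Dm_neg_eq_0[OF 2] pm_neg_eq_0[OF 2])
  next
    case 3
    show ?thesis
      unfolding 3 Dm_neg_eq_hankel_catalan hankel_catalan pm_reflect ..
  qed
qed

end
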